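(* Let $G$ be a regular CERS and let $S$ be a maximal resonant set of $G$. If $F$ is an inner face of $G$ that does not belong to $S$, then some inner face adjacent to $F$ belongs to $S$.
   Context: A CERS (catacondensed even ring system) is a simple bipartite 2-connected plane graph with all interior vertices of degree 3 and all boundary vertices of degree 2 or 3, whose inner dual (graph on inner faces, adjacent iff sharing an edge) is a tree. For inner faces $F,F',F''$ with $F,F'$ sharing edge $e$ and $F',F''$ sharing edge $f$ ($F\ne F''$), the adjacent triple $(F,F',F'')$ is regular if $d_G(e,f)$ (distance in the line graph of $G$) is even. A CERS is regular if it has at most two inner faces or all adjacent triples of faces are regular. An inner face $F$ is $M$-alternating for a perfect matching $M$ if the edges of $F$ alternate in and out of $M$. A set $S$ of pairwise disjoint inner faces is a resonant set if there is a perfect matching $M$ such that every face in $S$ is $M$-alternating; it is maximal if it is maximal under inclusion among resonant sets. *)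

theory Defs
  imports Main
begin

text \<open>A plane embedding of a 2-connected graph is given combinatorially by its faces:
  a finite set Fs of face labels, a boundary map bd (each face boundary is a cycle
  of G, given as a set of edges) and a distinguished outer face out.\<close>

definition simple_graph :: "'a set \<Rightarrow> 'a set set \<Rightarrow> bool" where
  "simple_graph V E \<longleftrightarrow> finite V \<and> (\<forall>e\<in>E. e \<subseteq> V \<and> card e = 2)"

definition degree :: "'a set set \<Rightarrow> 'a \<Rightarrow> nat" where
  "degree E v = card {e\<in>E. v \<in> e}"

definition walk_rel :: "'a set \<Rightarrow> 'a set set \<Rightarrow> 'a \<Rightarrow> 'a \<Rightarrow> bool" where
  "walk_rel W E u v \<longleftrightarrow> u \<in> W \<and> v \<in> W \<and> {u, v} \<in> E"

definition connected_on :: "'a set \<Rightarrow> 'a set set \<Rightarrow> bool" where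
  "connected_on W E \<longleftrightarrow> W \<noteq> {} \<and> (\<forall>u\<in>W. \<forall>v\<in>W. (walk_rel W E)\<^sup>*\<^sup>* u v)"

definition two_connected :: "'a set \<Rightarrow> 'a set set \<Rightarrow> bool" where
  "two_connected V E \<longleftrightarrow> card V \<ge> 3 \<and> connected_on V E \<and>
     (\<forall>x\<in>V. connected_on (V - {x}) E)"

definition bipartite :: "'a set \<Rightarrow> 'a set set \<Rightarrow> bool" where
  "bipartite V E \<longleftrightarrow> (\<exists>c :: 'a \<Rightarrow> bool. \<forall>e\<in>E. \<forall>u\<in>e. \<forall>v\<in>e. u \<noteq> v \<longrightarrow> c u \<noteq> c v)"

definition is_cycle :: "'a set set \<Rightarrow> 'a set set \<Rightarrow> bool" where
  "is_cycle E C \<longleftrightarrow> C \<subseteq> E \<and> C \<noteq> {} \<and> finite C \<and> (\<forall>v\<in>\<Union>C. degree C v = 2) \<and>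
     (\<forall>D. D \<subseteq> C \<and> D \<noteq> {} \<and> D \<noteq> C \<longrightarrow> (\<exists>e\<in>D. \<exists>f\<in>C - D. e \<inter> f \<noteq> {}))"

text \<open>Combinatorial description of a 2-connected plane graph via its facial cycles:
  every face boundary is a cycle, every edge lies on exactly two faces, around every
  vertex the faces form a single cyclic sequence (connected vertex link), and Euler's
  formula holds (so the surface obtained by gluing discs to the faces is the sphere).\<close>
definition link_rel :: "'a set set \<Rightarrow> 'f set \<Rightarrow> ('f \<Rightarrow> 'a set set) \<Rightarrow> 'a \<Rightarrow> 'a set \<Rightarrow> 'a set \<Rightarrow> bool" where
  "link_rel E Fs bd v e f \<longleftrightarrow> e \<in> E \<and> f \<in> E \<and> v \<in> e \<and> v \<in> f \<and>
     (\<exists>F\<in>Fs. e \<in> bd F \<and> f \<in> bd F)"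

definition plane_faces :: "'a set \<Rightarrow> 'a set set \<Rightarrow> 'f set \<Rightarrow> ('f \<Rightarrow> 'a set set) \<Rightarrow> 'f \<Rightarrow> bool" where
  "plane_faces V E Fs bd out \<longleftrightarrow> finite Fs \<and> out \<in> Fs \<and>
     (\<forall>F\<in>Fs. is_cycle E (bd F)) \<and>
     (\<forall>e\<in>E. card {F\<in>Fs. e \<in> bd F} = 2) \<and>
     (\<forall>v\<in>V. \<forall>e\<in>E. \<forall>f\<in>E. v \<in> e \<and> v \<in> f \<longrightarrow> (link_rel E Fs bd v)\<^sup>*\<^sup>* e f) \<and>
     int (card V) - int (card E) + int (card Fs) = 2"

definition inner_faces :: "'f set \<Rightarrow> 'f \<Rightarrow> 'f set" where
  "inner_faces Fs out = Fs - {out}"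

definition face_adj :: "('f \<Rightarrow> 'a set set) \<Rightarrow> 'f \<Rightarrow> 'f \<Rightarrow> bool" where
  "face_adj bd F F' \<longleftrightarrow> F \<noteq> F' \<and> bd F \<inter> bd F' \<noteq> {}"

definition is_tree :: "'b set \<Rightarrow> ('b \<Rightarrow> 'b \<Rightarrow> bool) \<Rightarrow> bool" where
  "is_tree W R \<longleftrightarrow> finite W \<and> W \<noteq> {} \<and>
     (\<forall>u\<in>W. \<forall>v\<in>W. (\<lambda>a b. a \<in> W \<and> b \<in> W \<and> R a b)\<^sup>*\<^sup>* u v) \<and>
     card {{a, b} | a b. a \<in> W \<and> b \<in> W \<and> R a b} + 1 = card W"

definition cers :: "'a set \<Rightarrow> 'a set set \<Rightarrow> 'f set \<Rightarrow> ('f \<Rightarrow> 'a set set) \<Rightarrow> 'f \<Rightarrow> bool" where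
  "cers V E Fs bd out \<longleftrightarrow> simple_graph V E \<and> bipartite V E \<and> two_connected V E \<and>
     plane_faces V E Fs bd out \<and>
     (\<forall>v\<in>V - \<Union>(bd out). degree E v = 3) \<and>
     (\<forall>v\<in>V \<inter> \<Union>(bd out). degree E v = 2 \<or> degree E v = 3) \<and>
     is_tree (inner_faces Fs out) (face_adj bd)"

definition line_adj :: "'a set set \<Rightarrow> 'a set \<Rightarrow> 'a set \<Rightarrow> bool" where
  "line_adj E e f \<longleftrightarrow> e \<in> E \<and> f \<in> E \<and> e \<noteq> f \<and> e \<inter> f \<noteq> {}"

definition line_dist :: "'a set set \<Rightarrow> 'a set \<Rightarrow> 'a set \<Rightarrow> nat" where
  "line_dist E e f = (LEAST n. (line_adj E ^^ n) e f)"

definition regular_cers :: "'a set \<Rightarrow> 'a set set \<Rightarrow> 'f set \<Rightarrow> ('f \<Rightarrow> 'a set set) \<Rightarrow> 'f \<Rightarrow> bool" where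
  "regular_cers V E Fs bd out \<longleftrightarrow> cers V E Fs bd out \<and>
     (card (inner_faces Fs out) \<le> 2 \<or>
      (\<forall>F\<in>inner_faces Fs out. \<forall>F'\<in>inner_faces Fs out. \<forall>F''\<in>inner_faces Fs out. \<forall>e f.
         F \<noteq> F' \<and> F' \<noteq> F'' \<and> F \<noteq> F'' \<and> e \<in> bd F \<and> e \<in> bd F' \<and> f \<in> bd F' \<and> f \<in> bd F''
         \<longrightarrow> even (line_dist E e f)))"

definition perfect_matching :: "'a set \<Rightarrow> 'a set set \<Rightarrow> 'a set set \<Rightarrow> bool" where
  "perfect_matching V E M \<longleftrightarrow> M \<subseteq> E \<and> (\<forall>v\<in>V. degree M v = 1)"

text \<open>The edges of the facial cycle of F alternate in and out of M: every vertex of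
  the cycle is incident with exactly one of its two cycle edges lying in M.\<close>
definition M_alternating :: "('f \<Rightarrow> 'a set set) \<Rightarrow> 'a set set \<Rightarrow> 'f \<Rightarrow> bool" where
  "M_alternating bd M F \<longleftrightarrow> (\<forall>v\<in>\<Union>(bd F). card {e \<in> bd F \<inter> M. v \<in> e} = 1)"

definition resonant_set :: "'a set \<Rightarrow> 'a set set \<Rightarrow> 'f set \<Rightarrow> ('f \<Rightarrow> 'a set set) \<Rightarrow> 'f \<Rightarrow> 'f set \<Rightarrow> bool" where
  "resonant_set V E Fs bd out S \<longleftrightarrow> S \<subseteq> inner_faces Fs out \<and>
     (\<forall>F\<in>S. \<forall>F'\<in>S. F \<noteq> F' \<longrightarrow> \<Union>(bd F) \<inter> \<Union>(bd F') = {}) \<and>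
     (\<exists>M. perfect_matching V E M \<and> (\<forall>F\<in>S. M_alternating bd M F))"

definition maximal_resonant_set :: "'a set \<Rightarrow> 'a set set \<Rightarrow> 'f set \<Rightarrow> ('f \<Rightarrow> 'a set set) \<Rightarrow> 'f \<Rightarrow> 'f set \<Rightarrow> bool" where
  "maximal_resonant_set V E Fs bd out S \<longleftrightarrow> resonant_set V E Fs bd out S \<and>
     (\<forall>S'. resonant_set V E Fs bd out S' \<and> S \<subseteq> S' \<longrightarrow> S' = S)"

end

(*
  Adding to a maximal resonant set S an inner face F with no neighbour in S keeps the faces
  pairwise vertex-disjoint: two inner faces through a common vertex of degree at most three share
  an edge at it. So it suffices to show that every family T of pairwise vertex-disjoint inner faces
  of a regular CERS is resonant.

  Regularity forbids interior vertices, so by Euler's formula the chords (edges off the outer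
  cycle) correspond bijectively to the edges of the inner dual tree. Removing an inner face H from
  that tree splits the others into branches, one behind each chord of H, and mapping every edge to
  the chord of H behind which it lies retracts the line graph of G onto the boundary cycle of H.
  Hence line-graph distances between edges of H are realised along H, and regularity makes all
  chords of H lie at even distance from each other: in a 2-edge-colouring of the even cycle
  bounding H all chords get the same colour. Choosing on each face of T the colour class free of
  chords, on every other inner face the complementary class, and letting a chord enter the
  matching when neither of its two faces lies in T, yields a perfect matching for which all faces
  of T are alternating.
*)

theory Submission
  imports Defs
begin

lemma card_2_eq_doubleton:
  assumes "card X = 2" "x \<in> X" "y \<in> X" "x \<noteq> y"
  shows "X = {x, y}"
  using assms by (auto simp: card_2_iff)

lemma card_2_obtain_other:
  assumes "card X = 2" "x \<in> X"
  obtains y where "y \<in> X" "y \<noteq> x" "X = {x, y}"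
proof -
  obtain a b where "X = {a, b}" "a \<noteq> b" using assms(1) card_2_iff by metis
  then show ?thesis using assms(2) that by auto
qed

lemma card_3_eq_triple:
  assumes "card X = 3" "x \<in> X" "y \<in> X" "z \<in> X" "x \<noteq> y" "x \<noteq> z" "y \<noteq> z"
  shows "X = {x, y, z}"
proof -
  have "finite X" using assms(1) by (metis card.infinite zero_neq_numeral)
  moreover have "{x, y, z} \<subseteq> X" "card {x, y, z} = card X" using assms by auto
  ultimately show ?thesis using card_subset_eq by metis
qed

lemma rtranclp_first_step_avoiding:
  assumes "R\<^sup>*\<^sup>* x y" "y \<noteq> x"
  shows "\<exists>z. R x z \<and> (\<lambda>a b. R a b \<and> a \<noteq> x \<and> b \<noteq> x)\<^sup>*\<^sup>* z y"
  using assms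
proof (induction rule: rtranclp_induct)
  case (step y z)
  show ?case
  proof (cases "y = x")
    case False
    with step obtain z' where "R x z'" "(\<lambda>a b. R a b \<and> a \<noteq> x \<and> b \<noteq> x)\<^sup>*\<^sup>* z' y"
      by blast
    moreover have "(\<lambda>a b. R a b \<and> a \<noteq> x \<and> b \<noteq> x)\<^sup>*\<^sup>* z' z"
      by (rule rtranclp.rtrancl_into_rtrancl[OF calculation(2)]) (use step.hyps(2) step.prems False in simp)
    ultimately show ?thesis by blast
  qed (use step in auto)
qed simp

lemma connected_card_le_edges:
  assumes fin: "finite W" and r: "r \<in> W" and conn: "\<forall>u\<in>W. Q\<^sup>*\<^sup>* r u"
    and inW: "\<And>x y. Q x y \<Longrightarrow> x \<in> W \<and> y \<in> W"
  shows "card W \<le> card {{x, y} | x y. Q x y} + 1"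
proof -
  define d where "d w = (LEAST n. (Q ^^ n) r w)" for w
  have d_walk: "(Q ^^ d w) r w" if w: "w \<in> W" for w
  proof -
    obtain n where "(Q ^^ n) r w" using conn w rtranclp_power by metis
    then show ?thesis unfolding d_def by (rule LeastI)
  qed
  have parent: "\<exists>p. Q p w \<and> d p < d w" if w: "w \<in> W - {r}" for w
  proof (cases "d w")
    case 0
    then have "r = w" using d_walk[of w] w by simp
    with w show ?thesis by simp
  next
    case (Suc k)
    then have "(Q ^^ Suc k) r w" using d_walk[of w] w by simp
    then obtain p where "(Q ^^ k) r p" "Q p w" by (rule relpowp_Suc_E)
    moreover have "d p \<le> k" unfolding d_def using \<open>(Q ^^ k) r p\<close> by (rule Least_le)
    ultimately show ?thesis using Suc by auto
  qed
  then obtain p where p: "\<And>w. w \<in> W - {r} \<Longrightarrow> Q (p w) w \<and> d (p w) < d w" by metis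
  have inj: "inj_on (\<lambda>w. {p w, w}) (W - {r})"
  proof (rule inj_onI)
    fix w w' assume "w \<in> W - {r}" "w' \<in> W - {r}" "{p w, w} = {p w', w'}"
    then show "w = w'" using p[of w] p[of w'] by (auto simp: doubleton_eq_iff)
  qed
  have "finite {{x, y} | x y. Q x y}"
    by (rule finite_subset[of _ "Pow W"]) (use fin inW in auto)
  moreover have "(\<lambda>w. {p w, w}) ` (W - {r}) \<subseteq> {{x, y} | x y. Q x y}"
  proof (rule image_subsetI)
    fix w assume "w \<in> W - {r}"
    then show "{p w, w} \<in> {{x, y} | x y. Q x y}" using p[of w] by blast
  qed
  ultimately have "card ((\<lambda>w. {p w, w}) ` (W - {r})) \<le> card {{x, y} | x y. Q x y}"
    by (rule card_mono)
  then have "card (W - {r}) \<le> card {{x, y} | x y. Q x y}" by (simp add: card_image[OF inj])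
  then show ?thesis using r fin by (simp add: card_Diff_singleton)
qed

lemma is_tree_no_detour:
  assumes tree: "is_tree W R" and sym: "symp R" and a: "a \<in> W" and "R a b" "R a c" "b \<noteq> c"
    and detour: "(\<lambda>x y. x \<in> W - {a} \<and> y \<in> W - {a} \<and> R x y)\<^sup>*\<^sup>* b c"
  shows False
proof -
  define RW where "RW x y \<longleftrightarrow> x \<in> W \<and> y \<in> W \<and> R x y" for x y
  define Q where "Q x y \<longleftrightarrow> RW x y \<and> {x, y} \<noteq> {a, b}" for x y
  have b: "b \<in> W - {a}" using detour \<open>b \<noteq> c\<close> by (cases rule: converse_rtranclpE) auto
  have c: "c \<in> W - {a}" using detour \<open>b \<noteq> c\<close> by (cases rule: rtranclp.cases) auto
  have "symp Q" using sym unfolding Q_def RW_def symp_def by (auto simp: insert_commute)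
  have "(\<lambda>x y. x \<in> W - {a} \<and> y \<in> W - {a} \<and> R x y) \<le> Q"
    unfolding Q_def RW_def by (auto simp: doubleton_eq_iff)
  then have "Q\<^sup>*\<^sup>* b c" using detour rtranclp_mono by blast
  moreover have "Q a c" using a c \<open>R a c\<close> \<open>b \<noteq> c\<close> unfolding Q_def RW_def by (auto simp: doubleton_eq_iff)
  ultimately have "Q\<^sup>*\<^sup>* a b"
    using symp_rtranclp[OF \<open>symp Q\<close>] by (meson converse_rtranclp_into_rtranclp sympD)
  then have "Q\<^sup>*\<^sup>* b a" using symp_rtranclp[OF \<open>symp Q\<close>] by (meson sympD)
  have "RW \<le> Q\<^sup>*\<^sup>*"
  proof (intro predicate2I)
    fix x y assume "RW x y"
    then show "Q\<^sup>*\<^sup>* x y"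
      using \<open>Q\<^sup>*\<^sup>* a b\<close> \<open>Q\<^sup>*\<^sup>* b a\<close> unfolding Q_def by (cases "{x, y} = {a, b}") (auto simp: doubleton_eq_iff)
  qed
  then have "RW\<^sup>*\<^sup>* \<le> Q\<^sup>*\<^sup>*" using rtranclp_mono[of RW "Q\<^sup>*\<^sup>*"] by simp
  moreover have "RW\<^sup>*\<^sup>* a u" if "u \<in> W" for u using tree a that unfolding is_tree_def RW_def by blast
  ultimately have Q_conn: "\<forall>u\<in>W. Q\<^sup>*\<^sup>* a u" by blast
  have "finite W" using tree by (simp add: is_tree_def)
  have Q_in: "x \<in> W \<and> y \<in> W" if "Q x y" for x y using that by (simp add: Q_def RW_def)
  have "card W \<le> card {{x, y} | x y. Q x y} + 1"
    by (rule connected_card_le_edges[OF \<open>finite W\<close> a Q_conn Q_in])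
  define P where "P = {{x, y} | x y. RW x y}"
  have "finite P" unfolding P_def RW_def
    by (rule finite_subset[of _ "Pow W"]) (use tree in \<open>auto simp: is_tree_def\<close>)
  have "{a, b} \<in> P" using a b \<open>R a b\<close> unfolding P_def RW_def by blast
  have "{{x, y} | x y. Q x y} = P - {{a, b}}" unfolding Q_def P_def by blast
  moreover have "card P > 0" using \<open>finite P\<close> \<open>{a, b} \<in> P\<close> card_gt_0_iff by blast
  ultimately have "card W \<le> card P"
    using \<open>card W \<le> _\<close> \<open>finite P\<close> \<open>{a, b} \<in> P\<close> by (simp add: card_Diff_singleton)
  moreover have "card P + 1 = card W" using tree unfolding is_tree_def P_def RW_def by blast
  ultimately show False by simp
qed

definition two_regular :: "'a set set \<Rightarrow> bool" where
  "two_regular D \<longleftrightarrow> finite D \<and> (\<forall>g\<in>D. card g = 2) \<and> (\<forall>u\<in>\<Union>D. card {g\<in>D. u \<in> g} = 2)"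

lemma two_regularD:
  assumes "two_regular D"
  shows "finite D" and "g \<in> D \<Longrightarrow> card g = 2" and "u \<in> g \<Longrightarrow> g \<in> D \<Longrightarrow> card {h\<in>D. u \<in> h} = 2"
  using assms unfolding two_regular_def by blast+

lemma two_regular_edges_at:
  assumes "two_regular D" "{u, x} \<in> D"
  obtains y where "{u, y} \<in> D" "y \<noteq> x" "y \<noteq> u" "\<And>h. h \<in> D \<Longrightarrow> u \<in> h \<longleftrightarrow> h = {u, x} \<or> h = {u, y}"
proof -
  have "card {h\<in>D. u \<in> h} = 2" using two_regularD(3)[OF assms(1) _ assms(2)] by simp
  moreover have "{u, x} \<in> {h\<in>D. u \<in> h}" using assms(2) by simp
  ultimately obtain g where g: "g \<in> {h\<in>D. u \<in> h}" "g \<noteq> {u, x}" and at_u: "{h\<in>D. u \<in> h} = {{u, x}, g}"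
    by (rule card_2_obtain_other)
  have "card g = 2" "u \<in> g" using two_regularD(2)[OF assms(1)] g(1) by auto
  then obtain y where "y \<noteq> u" "g = {u, y}" by (rule card_2_obtain_other)
  have "h = {u, x} \<or> h = {u, y}" if "h \<in> D" "u \<in> h" for h
  proof -
    have "h \<in> {{u, x}, g}" using that unfolding at_u[symmetric] by simp
    then show ?thesis using \<open>g = {u, y}\<close> by simp
  qed
  moreover have "y \<noteq> x" using g(2) \<open>g = {u, y}\<close> by blast
  moreover have "{u, y} \<in> D" using g(1) \<open>g = {u, y}\<close> by simp
  ultimately show ?thesis using that \<open>y \<noteq> u\<close> assms(2) by blast
qed

lemma Collect_eq_doubletonI:
  assumes "\<And>h. P h \<Longrightarrow> h = e \<or> h = e'" "P e" "P e'"
  shows "{h. P h} = {e, e'}"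
  using assms by blast

definition proper_edge_colouring :: "'a set set \<Rightarrow> ('a set \<Rightarrow> bool) \<Rightarrow> bool" where
  "proper_edge_colouring D \<kappa> \<longleftrightarrow> (\<forall>g\<in>D. \<forall>g'\<in>D. g \<noteq> g' \<longrightarrow> g \<inter> g' \<noteq> {} \<longrightarrow> \<kappa> g \<noteq> \<kappa> g')"

lemma proper_edge_colouringD:
  "proper_edge_colouring D \<kappa> \<Longrightarrow> g \<in> D \<Longrightarrow> g' \<in> D \<Longrightarrow> g \<noteq> g' \<Longrightarrow> u \<in> g \<Longrightarrow> u \<in> g' \<Longrightarrow> \<kappa> g \<noteq> \<kappa> g'"
  unfolding proper_edge_colouring_def by blast

lemma proper_edge_colouringI:
  assumes "\<And>g g' u. g \<in> D \<Longrightarrow> g' \<in> D \<Longrightarrow> g \<noteq> g' \<Longrightarrow> u \<in> g \<Longrightarrow> u \<in> g' \<Longrightarrow> \<kappa> g \<noteq> \<kappa> g'"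
  shows "proper_edge_colouring D \<kappa>"
  unfolding proper_edge_colouring_def
proof (intro ballI impI)
  fix g g' assume "g \<in> D" "g' \<in> D" "g \<noteq> g'" "g \<inter> g' \<noteq> {}"
  then obtain u where "u \<in> g" "u \<in> g'" by blast
  then show "\<kappa> g \<noteq> \<kappa> g'" by (rule assms[OF \<open>g \<in> D\<close> \<open>g' \<in> D\<close> \<open>g \<noteq> g'\<close>])
qed

lemma bipartite_subset:
  assumes "bipartite V D" "D' \<subseteq> D"
  shows "bipartite V D'"
proof -
  obtain c :: "'a \<Rightarrow> bool" where c: "\<forall>e\<in>D. \<forall>u\<in>e. \<forall>v\<in>e. u \<noteq> v \<longrightarrow> c u \<noteq> c v"
    using assms(1) unfolding bipartite_def by (elim exE)
  then have "\<forall>e\<in>D'. \<forall>u\<in>e. \<forall>v\<in>e. u \<noteq> v \<longrightarrow> c u \<noteq> c v" using assms(2) by (intro ballI impI) (use c in blast)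
  then show ?thesis unfolding bipartite_def by (rule exI[of _ c])
qed

lemma bipartite_insert_edge:
  fixes c :: "'a \<Rightarrow> bool"
  assumes "\<forall>e\<in>D. \<forall>u\<in>e. \<forall>u'\<in>e. u \<noteq> u' \<longrightarrow> c u \<noteq> c u'" "c a \<noteq> c w"
  shows "bipartite V (insert {a, w} D)"
  unfolding bipartite_def
proof (intro exI[of _ c] ballI impI)
  fix e u u' assume "e \<in> insert {a, w} D" "u \<in> e" "u' \<in> e" "u \<noteq> u'"
  then consider "{u, u'} = {a, w}" | "e \<in> D" by auto
  then show "c u \<noteq> c u'"
  proof cases
    case 1
    then show ?thesis using assms(2) by (auto simp: doubleton_eq_iff)
  next
    case 2
    then show ?thesis using \<open>u \<in> e\<close> \<open>u' \<in> e\<close> \<open>u \<noteq> u'\<close> by (rule assms(1)[rule_format])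
  qed
qed

locale two_regular_path =
  fixes D :: "'a set set" and v a b w x y :: 'a
  assumes two_reg: "two_regular D"
    and at_v: "\<And>h. h \<in> D \<Longrightarrow> v \<in> h \<longleftrightarrow> h = {v, a} \<or> h = {v, b}"
    and at_b: "\<And>h. h \<in> D \<Longrightarrow> b \<in> h \<longleftrightarrow> h = {v, b} \<or> h = {b, w}"
    and at_a: "\<And>h. h \<in> D \<Longrightarrow> a \<in> h \<longleftrightarrow> h = {v, a} \<or> h = {a, x}"
    and at_w: "\<And>h. h \<in> D \<Longrightarrow> w \<in> h \<longleftrightarrow> h = {b, w} \<or> h = {w, y}"
    and path: "{v, a} \<in> D" "{v, b} \<in> D" "{b, w} \<in> D" "{a, x} \<in> D" "{w, y} \<in> D"
    and distinct: "v \<noteq> a" "v \<noteq> b" "v \<noteq> w" "a \<noteq> b" "a \<noteq> w" "b \<noteq> w" "x \<noteq> v" "y \<noteq> b"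
begin

lemma edges_at_path:
  assumes "h \<in> D" "u \<in> h" "u \<in> {v, a, b, w}"
  shows "h \<in> {{v, a}, {v, b}, {b, w}, {a, x}, {w, y}}"
proof -
  from assms(3) consider "u = v" | "u = a" | "u = b" | "u = w" by blast
  then show ?thesis
  proof cases
    case 1
    then show ?thesis using at_v[OF assms(1)] assms(2) by auto
  next
    case 2
    then show ?thesis using at_a[OF assms(1)] assms(2) by auto
  next
    case 3
    then show ?thesis using at_b[OF assms(1)] assms(2) by auto
  next
    case 4
    then show ?thesis using at_w[OF assms(1)] assms(2) by auto
  qed
qed

lemma path_colouring:
  assumes "proper_edge_colouring D' \<kappa>"
    and outside: "\<And>g. g \<in> D \<Longrightarrow> \<not> g \<subseteq> {v, a, b, w} \<Longrightarrow> g \<in> D' \<and> \<kappa>' g = \<kappa> g"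
    and "\<kappa>' {v, a} \<noteq> \<kappa>' {v, b}" "\<kappa>' {v, b} \<noteq> \<kappa>' {b, w}"
    and "\<kappa>' {v, a} \<noteq> \<kappa>' {a, x}" "\<kappa>' {b, w} \<noteq> \<kappa>' {w, y}"
  shows "proper_edge_colouring D \<kappa>'"
proof (rule proper_edge_colouringI)
  fix g g' u assume g: "g \<in> D" "g' \<in> D" "g \<noteq> g'" "u \<in> g" "u \<in> g'"
  have pair: "\<kappa>' g \<noteq> \<kappa>' g'" if "g \<in> {e, e'}" "g' \<in> {e, e'}" "\<kappa>' e \<noteq> \<kappa>' e'" for e e'
    using that g(3) by auto
  show "\<kappa>' g \<noteq> \<kappa>' g'"
  proof (cases "u \<in> {v, a, b, w}")
    case True
    then consider "u = v" | "u = a" | "u = b" | "u = w" by blast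
    then show ?thesis
    proof cases
      case 1
      then show ?thesis using at_v g assms(3) by (intro pair) auto
    next
      case 2
      then show ?thesis using at_a g assms(5) by (intro pair) auto
    next
      case 3
      then show ?thesis using at_b g assms(4) by (intro pair) auto
    next
      case 4
      then show ?thesis using at_w g assms(6) by (intro pair) auto
    qed
  next
    case False
    then have "g \<in> D' \<and> \<kappa>' g = \<kappa> g" "g' \<in> D' \<and> \<kappa>' g' = \<kappa> g'"
      using outside g by blast+
    then show ?thesis using proper_edge_colouringD[OF assms(1) _ _ g(3) g(4,5)] by simp
  qed
qed

lemma square_closes:
  assumes "{a, w} \<in> D"
  shows "x = w" and "y = a"
proof -
  have "{a, w} = {a, x}" using at_a[OF assms] distinct by (auto simp: doubleton_eq_iff)
  then show "x = w" using distinct by (auto simp: doubleton_eq_iff)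
  have "{a, w} = {w, y}" using at_w[OF assms] distinct by (auto simp: doubleton_eq_iff)
  then show "y = a" using distinct by (auto simp: doubleton_eq_iff)
qed

lemma square_removal_two_regular:
  assumes "{a, w} \<in> D"
  shows "two_regular (D - {{v, a}, {v, b}, {b, w}, {a, w}})" (is "two_regular (D - ?Q)")
  unfolding two_regular_def
proof (intro conjI ballI)
  show "finite (D - ?Q)" using two_regularD(1)[OF two_reg] by simp
  show "card g = 2" if "g \<in> D - ?Q" for g using two_regularD(2)[OF two_reg] that by simp
  fix u assume "u \<in> \<Union>(D - ?Q)"
  then obtain h where h: "h \<in> D - ?Q" "u \<in> h" by blast
  then have "u \<notin> {v, a, b, w}"
    using edges_at_path[OF _ h(2)] square_closes[OF assms] by (auto simp: insert_commute)
  then have "{h\<in>D - ?Q. u \<in> h} = {h\<in>D. u \<in> h}" by auto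
  then show "card {h\<in>D - ?Q. u \<in> h} = 2" using two_regularD(3)[OF two_reg h(2)] h(1) by simp
qed

lemma square_colouring:
  assumes "{a, w} \<in> D" "proper_edge_colouring (D - {{v, a}, {v, b}, {b, w}, {a, w}}) \<kappa>"
  shows "proper_edge_colouring D (\<lambda>g. if g \<in> {{v, a}, {v, b}, {b, w}, {a, w}} then g = {v, a} \<or> g = {b, w} else \<kappa> g)"
proof (rule path_colouring[OF assms(2)])
  fix g assume "g \<in> D" "\<not> g \<subseteq> {v, a, b, w}"
  then show "g \<in> D - {{v, a}, {v, b}, {b, w}, {a, w}} \<and>
    (if g \<in> {{v, a}, {v, b}, {b, w}, {a, w}} then g = {v, a} \<or> g = {b, w} else \<kappa> g) = \<kappa> g"
    by auto
qed (use square_closes[OF assms(1)] distinct in \<open>auto simp: doubleton_eq_iff insert_commute\<close>)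

lemma contraction_edges_at_ends:
  assumes "{a, w} \<notin> D"
  shows "{h \<in> insert {a, w} (D - {{v, a}, {v, b}, {b, w}}). a \<in> h} = {{a, w}, {a, x}}"
    and "{h \<in> insert {a, w} (D - {{v, a}, {v, b}, {b, w}}). w \<in> h} = {{a, w}, {w, y}}"
proof -
  let ?R = "{{v, a}, {v, b}, {b, w}}"
  have ends: "{h \<in> insert {a, w} (D - ?R). z \<in> h} = {{a, w}, {z, z'}}"
    if "z \<in> {a, w}" "{z, z'} \<in> D" "{z, z'} \<notin> ?R"
      and at_z: "\<And>h. h \<in> D \<Longrightarrow> z \<in> h \<Longrightarrow> h \<in> ?R \<or> h = {z, z'}" for z z'
  proof (rule Collect_eq_doubletonI)
    fix h assume h: "h \<in> insert {a, w} (D - ?R) \<and> z \<in> h"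
    show "h = {a, w} \<or> h = {z, z'}"
    proof (cases "h = {a, w}")
      case False
      then have "h \<in> D" "h \<notin> ?R" "z \<in> h" using h by auto
      then show ?thesis using at_z[OF \<open>h \<in> D\<close> \<open>z \<in> h\<close>] by (elim disjE) simp_all
    qed simp
  qed (use that(1-3) in auto)
  show "{h \<in> insert {a, w} (D - ?R). a \<in> h} = {{a, w}, {a, x}}"
  proof (rule ends)
    show "h \<in> ?R \<or> h = {a, x}" if "h \<in> D" "a \<in> h" for h
    proof -
      have "h = {v, a} \<or> h = {a, x}" using at_a[OF that(1)] that(2) by simp
      then show ?thesis by (elim disjE) simp_all
    qed
  qed (use path(4) distinct in \<open>auto simp: doubleton_eq_iff\<close>)
  show "{h \<in> insert {a, w} (D - ?R). w \<in> h} = {{a, w}, {w, y}}"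
  proof (rule ends)
    show "h \<in> ?R \<or> h = {w, y}" if "h \<in> D" "w \<in> h" for h
    proof -
      have "h = {b, w} \<or> h = {w, y}" using at_w[OF that(1)] that(2) by simp
      then show ?thesis by (elim disjE) simp_all
    qed
  qed (use path(5) distinct in \<open>auto simp: doubleton_eq_iff\<close>)
qed

lemma contraction_two_regular:
  assumes "{a, w} \<notin> D"
  shows "two_regular (insert {a, w} (D - {{v, a}, {v, b}, {b, w}}))" (is "two_regular (insert _ (D - ?R))")
  unfolding two_regular_def
proof (intro conjI ballI)
  show "finite (insert {a, w} (D - ?R))" using two_regularD(1)[OF two_reg] by simp
  show "card g = 2" if "g \<in> insert {a, w} (D - ?R)" for g
    using that two_regularD(2)[OF two_reg] distinct by auto
  fix u assume "u \<in> \<Union>(insert {a, w} (D - ?R))"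
  then obtain h where h: "h \<in> insert {a, w} (D - ?R)" "u \<in> h" by blast
  have "u \<notin> {v, b}"
  proof
    assume "u \<in> {v, b}"
    moreover have "h \<in> D" "h \<notin> ?R" using h distinct \<open>u \<in> {v, b}\<close> by auto
    ultimately show False using at_v[of h] at_b[of h] h(2) by auto
  qed
  then consider "u = a" | "u = w" | "u \<notin> {v, a, b, w}" by blast
  then show "card {h \<in> insert {a, w} (D - ?R). u \<in> h} = 2"
  proof cases
    case 3
    then have "{h \<in> insert {a, w} (D - ?R). u \<in> h} = {h\<in>D. u \<in> h}" by auto
    moreover have "h \<in> D" using h 3 by auto
    ultimately show ?thesis using two_regularD(3)[OF two_reg h(2)] by simp
  next
    case 1
    have "x \<noteq> w" using assms path(4) by auto
    then show ?thesis unfolding 1 contraction_edges_at_ends(1)[OF assms] using distinct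
      by (simp add: doubleton_eq_iff)
  next
    case 2
    have "y \<noteq> a" using assms path(5) by (auto simp: insert_commute)
    then show ?thesis unfolding 2 contraction_edges_at_ends(2)[OF assms] using distinct
      by (simp add: doubleton_eq_iff)
  qed
qed

lemma contraction_card:
  assumes "{a, w} \<notin> D"
  shows "card (insert {a, w} (D - {{v, a}, {v, b}, {b, w}})) < card D"
proof -
  let ?R = "{{v, a}, {v, b}, {b, w}}"
  have "card ?R = 3" using distinct by (simp add: doubleton_eq_iff)
  moreover have "?R \<subseteq> D" using path by blast
  ultimately have "card (D - ?R) + 3 = card D"
    using two_regularD(1)[OF two_reg] card_mono[of D ?R] by (simp add: card_Diff_subset)
  then show ?thesis using two_regularD(1)[OF two_reg] by (simp add: card_insert_if)
qed

lemma contraction_bipartite: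
  assumes "bipartite V D"
  shows "bipartite V (insert {a, w} (D - {{v, a}, {v, b}, {b, w}}))"
proof -
  from assms obtain c :: "'a \<Rightarrow> bool" where c: "\<forall>e\<in>D. \<forall>u\<in>e. \<forall>u'\<in>e. u \<noteq> u' \<longrightarrow> c u \<noteq> c u'"
    unfolding bipartite_def by (elim exE)
  have "c v \<noteq> c a" "c v \<noteq> c b" "c b \<noteq> c w"
    using c[rule_format, OF path(1)] c[rule_format, OF path(2)] c[rule_format, OF path(3)] distinct by simp_all
  then have "c a \<noteq> c w" by auto
  moreover have "\<forall>e\<in>D - {{v, a}, {v, b}, {b, w}}. \<forall>u\<in>e. \<forall>u'\<in>e. u \<noteq> u' \<longrightarrow> c u \<noteq> c u'"
    by (intro ballI impI) (use c in blast)
  ultimately show ?thesis by (intro bipartite_insert_edge)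
qed

lemma contraction_colouring:
  assumes "{a, w} \<notin> D" "proper_edge_colouring (insert {a, w} (D - {{v, a}, {v, b}, {b, w}})) \<kappa>"
  shows "proper_edge_colouring D
    (\<lambda>g. if g = {v, a} \<or> g = {b, w} then \<kappa> {a, w} else if g = {v, b} then \<not> \<kappa> {a, w} else \<kappa> g)"
    (is "proper_edge_colouring D ?\<kappa>'")
proof (rule path_colouring[OF assms(2)])
  have "{a, x} \<noteq> {a, w}" "{w, y} \<noteq> {a, w}" using assms path(4,5) by (auto simp: insert_commute)
  moreover have "{a, x} \<in> insert {a, w} (D - {{v, a}, {v, b}, {b, w}})"
    "{w, y} \<in> insert {a, w} (D - {{v, a}, {v, b}, {b, w}})"
    using path(4,5) distinct by (auto simp: doubleton_eq_iff)
  ultimately have "\<kappa> {a, x} \<noteq> \<kappa> {a, w}" "\<kappa> {w, y} \<noteq> \<kappa> {a, w}"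
    using proper_edge_colouringD[OF assms(2), of "{a, x}" "{a, w}" a]
      proper_edge_colouringD[OF assms(2), of "{w, y}" "{a, w}" w] by simp_all
  then show "?\<kappa>' {v, a} \<noteq> ?\<kappa>' {a, x}" "?\<kappa>' {b, w} \<noteq> ?\<kappa>' {w, y}"
    using distinct by (auto simp: doubleton_eq_iff)
  show "?\<kappa>' {v, a} \<noteq> ?\<kappa>' {v, b}" "?\<kappa>' {v, b} \<noteq> ?\<kappa>' {b, w}"
    using distinct by (auto simp: doubleton_eq_iff)
  fix g assume "g \<in> D" "\<not> g \<subseteq> {v, a, b, w}"
  then show "g \<in> insert {a, w} (D - {{v, a}, {v, b}, {b, w}}) \<and> ?\<kappa>' g = \<kappa> g" by auto
qed

end

lemma two_regular_path_exists:
  assumes reg: "two_regular D" and bip: "bipartite V D" and "g \<in> D"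
  obtains v a b w x y where "two_regular_path D v a b w x y"
proof -
  obtain v a where "{v, a} \<in> D" "v \<noteq> a"
    using two_regularD(2)[OF reg \<open>g \<in> D\<close>] card_2_iff \<open>g \<in> D\<close> by metis
  obtain b where vb: "{v, b} \<in> D" "b \<noteq> a" "b \<noteq> v" and at_v: "\<And>h. h \<in> D \<Longrightarrow> v \<in> h \<longleftrightarrow> h = {v, a} \<or> h = {v, b}"
    by (rule two_regular_edges_at[OF reg \<open>{v, a} \<in> D\<close>]) (rule that)
  have "{b, v} \<in> D" "{a, v} \<in> D" using vb(1) \<open>{v, a} \<in> D\<close> by (simp_all add: insert_commute)
  obtain w where bw: "{b, w} \<in> D" "w \<noteq> v" "w \<noteq> b" and at_b: "\<And>h. h \<in> D \<Longrightarrow> b \<in> h \<longleftrightarrow> h = {b, v} \<or> h = {b, w}"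
    by (rule two_regular_edges_at[OF reg \<open>{b, v} \<in> D\<close>]) (rule that)
  obtain x where ax: "{a, x} \<in> D" "x \<noteq> v" and at_a: "\<And>h. h \<in> D \<Longrightarrow> a \<in> h \<longleftrightarrow> h = {a, v} \<or> h = {a, x}"
    by (rule two_regular_edges_at[OF reg \<open>{a, v} \<in> D\<close>]) (rule that)
  have "{w, b} \<in> D" using bw(1) by (simp add: insert_commute)
  obtain y where wy: "{w, y} \<in> D" "y \<noteq> b" and at_w: "\<And>h. h \<in> D \<Longrightarrow> w \<in> h \<longleftrightarrow> h = {w, b} \<or> h = {w, y}"
    by (rule two_regular_edges_at[OF reg \<open>{w, b} \<in> D\<close>]) (rule that)
  from bip obtain c :: "'a \<Rightarrow> bool" where c: "\<forall>e\<in>D. \<forall>u\<in>e. \<forall>u'\<in>e. u \<noteq> u' \<longrightarrow> c u \<noteq> c u'"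
    unfolding bipartite_def by (elim exE)
  have "c v \<noteq> c a" "c v \<noteq> c b" "c b \<noteq> c w"
    using c[rule_format, OF \<open>{v, a} \<in> D\<close>] c[rule_format, OF vb(1)] c[rule_format, OF bw(1)]
      \<open>v \<noteq> a\<close> vb(3) bw(3) by simp_all
  then have "a \<noteq> w" by auto
  have "two_regular_path D v a b w x y"
    by unfold_locales (use reg at_v at_b at_a at_w \<open>{v, a} \<in> D\<close> vb bw ax wy \<open>v \<noteq> a\<close> \<open>a \<noteq> w\<close>
        in \<open>simp_all add: insert_commute\<close>)
  then show ?thesis by (rule that)
qed

text \<open>Induction on the number of edges: a path \<open>a - v - b - w\<close> either closes up to a square,
  which is removed, or is contracted to the single edge \<open>{a, w}\<close>; bipartiteness keeps
  \<open>a \<noteq> w\<close>.\<close>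

lemma two_regular_bipartite_edge_colouring:
  assumes "two_regular D" "bipartite V D"
  shows "\<exists>\<kappa>. proper_edge_colouring D \<kappa>"
  using assms
proof (induction "card D" arbitrary: D rule: less_induct)
  case less
  show ?case
  proof (cases "D = {}")
    case True
    then show ?thesis by (auto simp: proper_edge_colouring_def)
  next
    case False
    then obtain v a b w x y where "two_regular_path D v a b w x y"
      using two_regular_path_exists less.prems by blast
    then interpret two_regular_path D v a b w x y .
    show ?thesis
    proof (cases "{a, w} \<in> D")
      case True
      have "D - {{v, a}, {v, b}, {b, w}, {a, w}} \<subset> D" using path(1) by blast
      then have "card (D - {{v, a}, {v, b}, {b, w}, {a, w}}) < card D"
        using two_regularD(1)[OF two_reg] by (rule psubset_card_mono[rotated])
      moreover have "bipartite V (D - {{v, a}, {v, b}, {b, w}, {a, w}})"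
        using less.prems(2) by (rule bipartite_subset) blast
      ultimately obtain \<kappa> where "proper_edge_colouring (D - {{v, a}, {v, b}, {b, w}, {a, w}}) \<kappa>"
        using less.hyps square_removal_two_regular[OF True] by blast
      then show ?thesis using square_colouring[OF True] by blast
    next
      case False
      obtain \<kappa> where "proper_edge_colouring (insert {a, w} (D - {{v, a}, {v, b}, {b, w}})) \<kappa>"
        using less.hyps contraction_card[OF False] contraction_two_regular[OF False]
          contraction_bipartite[OF less.prems(2)] by blast
      then show ?thesis using contraction_colouring[OF False] by blast
    qed
  qed
qed

lemma two_regular_card_Union:
  assumes "two_regular C"
  shows "card (\<Union>C) = card C"
proof -
  have fin: "finite C" and edge: "\<And>e. e \<in> C \<Longrightarrow> card e = 2"
    using two_regularD[OF assms] by auto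
  then have "finite (\<Union>C)" by (metis card.infinite finite_Union zero_neq_numeral)
  have "(\<Sum>u\<in>\<Union>C. card {e\<in>C. u \<in> e}) = (\<Sum>u\<in>\<Union>C. \<Sum>e\<in>C. if u \<in> e then 1 else 0)"
    using fin by (intro sum.cong refl) (simp add: sum.inter_filter[symmetric])
  also have "\<dots> = (\<Sum>e\<in>C. \<Sum>u\<in>\<Union>C. if u \<in> e then 1 else 0)" by (rule sum.swap)
  also have "\<dots> = (\<Sum>e\<in>C. card e)"
  proof (intro sum.cong refl)
    fix e assume "e \<in> C"
    then have "\<Union>C \<inter> e = e" by blast
    then show "(\<Sum>u\<in>\<Union>C. if u \<in> e then 1 else 0) = card e"
      using \<open>finite (\<Union>C)\<close> by (simp add: sum.If_cases)
  qed
  finally have "(\<Sum>u\<in>\<Union>C. card {e\<in>C. u \<in> e}) = (\<Sum>e\<in>C. card e)" .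
  moreover have "(\<Sum>u\<in>\<Union>C. card {e\<in>C. u \<in> e}) = (\<Sum>u\<in>\<Union>C. 2)"
    by (intro sum.cong refl) (use two_regularD(3)[OF assms] in blast)
  moreover have "(\<Sum>e\<in>C. card e) = 2 * card C" using edge by simp
  ultimately show ?thesis by simp
qed

lemma is_cycleD:
  assumes "is_cycle E C"
  shows "C \<subseteq> E" and "finite C" and "\<And>v. v \<in> \<Union>C \<Longrightarrow> degree C v = 2"
    and "\<And>D. D \<subseteq> C \<Longrightarrow> D \<noteq> {} \<Longrightarrow> D \<noteq> C \<Longrightarrow> \<exists>e\<in>D. \<exists>f\<in>C - D. e \<inter> f \<noteq> {}"
  using assms unfolding is_cycle_def by blast+

lemma is_cycle_two_regular:
  assumes "is_cycle E C" "\<forall>e\<in>E. card e = 2"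
  shows "two_regular C"
  unfolding two_regular_def
proof (intro conjI ballI)
  show "finite C" by (rule is_cycleD(2)[OF assms(1)])
  show "card g = 2" if "g \<in> C" for g using that is_cycleD(1)[OF assms(1)] assms(2) by blast
  show "card {g\<in>C. u \<in> g} = 2" if "u \<in> \<Union>C" for u
    using is_cycleD(3)[OF assms(1) that] unfolding degree_def .
qed

lemma is_cycle_line_connected:
  assumes "is_cycle E C" "d \<in> C" "e \<in> C"
  shows "(line_adj E)\<^sup>*\<^sup>* d e"
proof -
  define D where "D = {g\<in>C. (line_adj E)\<^sup>*\<^sup>* d g}"
  have "D = C"
  proof (rule ccontr)
    assume "D \<noteq> C"
    have "D \<subseteq> C" unfolding D_def by blast
    moreover have "d \<in> D" using assms(2) unfolding D_def by simp
    ultimately obtain g g' where "g \<in> D" "g' \<in> C - D" "g \<inter> g' \<noteq> {}"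
      using is_cycleD(4)[OF assms(1) \<open>D \<subseteq> C\<close> _ \<open>D \<noteq> C\<close>] by blast
    moreover have "g \<noteq> g'" "g \<in> C" "g' \<in> C" using \<open>g \<in> D\<close> \<open>g' \<in> C - D\<close> \<open>D \<subseteq> C\<close> by auto
    ultimately have "line_adj E g g'" using is_cycleD(1)[OF assms(1)] unfolding line_adj_def by blast
    moreover have "(line_adj E)\<^sup>*\<^sup>* d g" using \<open>g \<in> D\<close> unfolding D_def by blast
    ultimately have "(line_adj E)\<^sup>*\<^sup>* d g'" by (simp add: rtranclp.rtrancl_into_rtrancl)
    then have "g' \<in> D" using \<open>g' \<in> C - D\<close> unfolding D_def by blast
    with \<open>g' \<in> C - D\<close> show False by blast
  qed
  then have "e \<in> D" using assms(3) by simp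
  then show ?thesis unfolding D_def by simp
qed

lemma relpowp_retraction_parity:
  fixes \<kappa> :: "'b \<Rightarrow> bool"
  assumes "(R ^^ n) x y"
    and step: "\<And>x y. R x y \<Longrightarrow> \<rho> x = \<rho> y \<or> R (\<rho> x) (\<rho> y) \<and> \<kappa> (\<rho> x) \<noteq> \<kappa> (\<rho> y)"
  shows "\<exists>m\<le>n. (R ^^ m) (\<rho> x) (\<rho> y) \<and> (\<kappa> (\<rho> x) = \<kappa> (\<rho> y) \<longleftrightarrow> even m)"
  using assms(1)
proof (induction n arbitrary: y)
  case (Suc n)
  then obtain z where "(R ^^ n) x z" "R z y" by (auto elim: relpowp_Suc_E)
  then obtain m where m: "m \<le> n" "(R ^^ m) (\<rho> x) (\<rho> z)" "\<kappa> (\<rho> x) = \<kappa> (\<rho> z) \<longleftrightarrow> even m"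
    using Suc.IH by blast
  from step[OF \<open>R z y\<close>] show ?case
  proof
    assume "\<rho> z = \<rho> y"
    then have "(R ^^ m) (\<rho> x) (\<rho> y)" "\<kappa> (\<rho> x) = \<kappa> (\<rho> y) \<longleftrightarrow> even m" using m by simp_all
    then show ?case using m(1) by (intro exI[of _ m] conjI) simp_all
  next
    assume zy: "R (\<rho> z) (\<rho> y) \<and> \<kappa> (\<rho> z) \<noteq> \<kappa> (\<rho> y)"
    then have "(R ^^ Suc m) (\<rho> x) (\<rho> y)" using m(2) by auto
    moreover have "\<kappa> (\<rho> x) = \<kappa> (\<rho> y) \<longleftrightarrow> even (Suc m)"
      using m(3) zy by (cases "\<kappa> (\<rho> x)"; cases "\<kappa> (\<rho> z)") auto
    ultimately show ?case using m(1) by (intro exI[of _ "Suc m"] conjI) simp_all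
  qed
qed simp

lemma even_Least_relpowp_retraction:
  fixes \<kappa> :: "'b \<Rightarrow> bool"
  assumes step: "\<And>x y. R x y \<Longrightarrow> \<rho> x = \<rho> y \<or> R (\<rho> x) (\<rho> y) \<and> \<kappa> (\<rho> x) \<noteq> \<kappa> (\<rho> y)"
    and "\<rho> d = d" "\<rho> e = e" "R\<^sup>*\<^sup>* d e" "even (LEAST n. (R ^^ n) d e)"
  shows "\<kappa> d = \<kappa> e"
proof -
  define n where "n = (LEAST n. (R ^^ n) d e)"
  obtain k where "(R ^^ k) d e" using assms(4) unfolding rtranclp_power by blast
  then have "(R ^^ n) d e" unfolding n_def by (rule LeastI)
  then have "\<exists>m\<le>n. (R ^^ m) (\<rho> d) (\<rho> e) \<and> (\<kappa> (\<rho> d) = \<kappa> (\<rho> e) \<longleftrightarrow> even m)"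
    using step by (rule relpowp_retraction_parity)
  then obtain m where "m \<le> n" "(R ^^ m) d e" "\<kappa> d = \<kappa> e \<longleftrightarrow> even m"
    unfolding assms(2,3) by blast
  moreover have "n \<le> m" unfolding n_def using \<open>(R ^^ m) d e\<close> by (rule Least_le)
  ultimately show ?thesis using assms(5) unfolding n_def[symmetric] by simp
qed

locale regular_cers_graph =
  fixes V :: "'a set" and E :: "'a set set" and Fs :: "'f set" and bd :: "'f \<Rightarrow> 'a set set" and out :: 'f
  assumes regular: "regular_cers V E Fs bd out"
begin

abbreviation inner :: "'f set" where "inner \<equiv> inner_faces Fs out"

lemma in_inner_iff [simp]: "H \<in> inner \<longleftrightarrow> H \<in> Fs \<and> H \<noteq> out"
  by (simp add: inner_faces_def)

lemma finite_V: "finite V"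
  and card_edge: "e \<in> E \<Longrightarrow> card e = 2"
  and edge_subset: "e \<in> E \<Longrightarrow> e \<subseteq> V"
  and bipartite: "bipartite V E"
  and out_face: "out \<in> Fs"
  and face_cycle: "F \<in> Fs \<Longrightarrow> is_cycle E (bd F)"
  and edge_two_faces: "e \<in> E \<Longrightarrow> card {F\<in>Fs. e \<in> bd F} = 2"
  and euler: "int (card V) - int (card E) + int (card Fs) = 2"
  and degree_interior: "v \<in> V \<Longrightarrow> v \<notin> \<Union>(bd out) \<Longrightarrow> degree E v = 3"
  and degree_boundary: "v \<in> V \<Longrightarrow> v \<in> \<Union>(bd out) \<Longrightarrow> degree E v = 2 \<or> degree E v = 3"
  and dual_tree: "is_tree inner (face_adj bd)"
  using regular unfolding regular_cers_def cers_def simple_graph_def plane_faces_def by simp_all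

lemma finite_E: "finite E"
  by (rule finite_subset[of _ "Pow V"]) (use finite_V edge_subset in auto)

lemma finite_Fs: "finite Fs"
  using regular unfolding regular_cers_def cers_def plane_faces_def by simp

lemma regular_triple:
  assumes "F \<in> inner" "F' \<in> inner" "F'' \<in> inner" "F \<noteq> F'" "F' \<noteq> F''" "F \<noteq> F''"
    and "e \<in> bd F" "e \<in> bd F'" "f \<in> bd F'" "f \<in> bd F''"
  shows "even (line_dist E e f)"
proof -
  have "{F, F', F''} \<subseteq> inner" using assms(1-3) by simp
  then have "3 \<le> card inner"
    using assms(4-6) finite_Fs card_mono[of inner "{F, F', F''}"] by (simp add: inner_faces_def)
  then show ?thesis using regular assms unfolding regular_cers_def by auto
qed

lemma face_edges: "F \<in> Fs \<Longrightarrow> bd F \<subseteq> E"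
  using is_cycleD(1)[OF face_cycle] .

lemma face_two_regular: "F \<in> Fs \<Longrightarrow> two_regular (bd F)"
  using face_cycle card_edge by (blast intro: is_cycle_two_regular)

lemma face_degree: "F \<in> Fs \<Longrightarrow> v \<in> e \<Longrightarrow> e \<in> bd F \<Longrightarrow> card {g\<in>bd F. v \<in> g} = 2"
  using two_regularD(3)[OF face_two_regular] .

lemma degree_le_3: "v \<in> V \<Longrightarrow> card {e\<in>E. v \<in> e} \<le> 3"
  using degree_interior degree_boundary unfolding degree_def by fastforce

lemma faces_of_edge:
  assumes "e \<in> E"
  obtains F F' where "F \<in> Fs" "F' \<in> Fs" "F \<noteq> F'" "e \<in> bd F" "e \<in> bd F'"
proof -
  obtain F F' where "{G\<in>Fs. e \<in> bd G} = {F, F'}" "F \<noteq> F'"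
    using edge_two_faces[OF assms] card_2_iff by metis
  then show ?thesis using that by blast
qed

lemma other_face:
  assumes "F \<in> Fs" "e \<in> bd F"
  obtains F' where "F' \<in> Fs" "F' \<noteq> F" "e \<in> bd F'"
proof -
  have "e \<in> E" using assms face_edges by blast
  then obtain G G' where "G \<in> Fs" "G' \<in> Fs" "G \<noteq> G'" "e \<in> bd G" "e \<in> bd G'"
    by (rule faces_of_edge)
  then show ?thesis using that by (cases "G = F") auto
qed

lemma faces_meet_in_edge:
  assumes "F \<in> Fs" "F' \<in> Fs" "v \<in> \<Union>(bd F)" "v \<in> \<Union>(bd F')"
  shows "\<exists>e\<in>bd F \<inter> bd F'. v \<in> e"
proof (rule ccontr)
  assume "\<not> ?thesis"
  then have disj: "{e\<in>bd F. v \<in> e} \<inter> {e\<in>bd F'. v \<in> e} = {}" by blast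
  have "card {e\<in>bd F. v \<in> e} = 2" "card {e\<in>bd F'. v \<in> e} = 2"
    using assms face_degree by blast+
  then have "card ({e\<in>bd F. v \<in> e} \<union> {e\<in>bd F'. v \<in> e}) = 4"
    using disj by (subst card_Un_disjoint) (auto intro: card_ge_0_finite)
  moreover have "{e\<in>bd F. v \<in> e} \<union> {e\<in>bd F'. v \<in> e} \<subseteq> {e\<in>E. v \<in> e}"
    using face_edges assms(1,2) by blast
  then have "card ({e\<in>bd F. v \<in> e} \<union> {e\<in>bd F'. v \<in> e}) \<le> card {e\<in>E. v \<in> e}"
    using finite_E by (intro card_mono) auto
  moreover have "v \<in> V" using assms(1,3) face_edges edge_subset by blast
  ultimately show False using degree_le_3 by fastforce
qed

lemma line_dist_meeting_edges:
  assumes "e \<in> E" "f \<in> E" "e \<noteq> f" "v \<in> e" "v \<in> f"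
  shows "line_dist E e f = 1"
  unfolding line_dist_def
proof (rule Least_equality)
  show "(line_adj E ^^ 1) e f" using assms unfolding line_adj_def by auto
  show "1 \<le> n" if "(line_adj E ^^ n) e f" for n using that assms(3) by (cases n) auto
qed

lemma edge_on_third_face:
  assumes "F1 \<in> Fs" "F2 \<in> Fs" "F3 \<in> Fs" "F1 \<noteq> F2" "e \<in> bd F1" "e \<in> bd F2" "e \<in> bd F3"
  shows "F3 = F1 \<or> F3 = F2"
proof (rule ccontr)
  assume "\<not> ?thesis"
  then have "card {F1, F2, F3} = 3" using assms(4) by auto
  moreover have "{F1, F2, F3} \<subseteq> {G\<in>Fs. e \<in> bd G}" using assms by blast
  then have "card {F1, F2, F3} \<le> card {G\<in>Fs. e \<in> bd G}" using finite_Fs by (intro card_mono) auto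
  moreover have "e \<in> E" using assms(1,5) face_edges by blast
  ultimately show False using edge_two_faces by simp
qed

lemma other_edge_at:
  assumes "F \<in> Fs" "e \<in> bd F" "v \<in> e"
  obtains f where "f \<in> bd F" "v \<in> f" "f \<noteq> e" "{g\<in>bd F. v \<in> g} = {e, f}"
proof -
  have "card {g\<in>bd F. v \<in> g} = 2" "e \<in> {g\<in>bd F. v \<in> g}" using face_degree assms by auto
  then obtain f where "f \<in> {g\<in>bd F. v \<in> g}" "f \<noteq> e" "{g\<in>bd F. v \<in> g} = {e, f}"
    by (rule card_2_obtain_other)
  then show ?thesis using that by blast
qed

lemma distinct_faces_distinct_edge_pairs:
  assumes "card {e\<in>E. v \<in> e} = 3" "H1 \<in> Fs" "H2 \<in> Fs" "H1 \<noteq> H2" "a \<in> bd H1" "v \<in> a"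
  shows "{g\<in>bd H1. v \<in> g} \<noteq> {g\<in>bd H2. v \<in> g}"
proof
  assume same: "{g\<in>bd H1. v \<in> g} = {g\<in>bd H2. v \<in> g}"
  obtain b where b: "b \<in> bd H1" "v \<in> b" "b \<noteq> a" and at_H1: "{g\<in>bd H1. v \<in> g} = {a, b}"
    by (rule other_edge_at[OF assms(2,5,6)])
  have "a \<in> E" "b \<in> E" using assms(2,5) b(1) face_edges by blast+
  have "finite {e\<in>E. v \<in> e}" using finite_E by simp
  then have "card ({e\<in>E. v \<in> e} - {a, b}) = 1"
    using assms(1,6) \<open>a \<in> E\<close> \<open>b \<in> E\<close> b(2,3) by (simp add: card_Diff_subset)
  then obtain c where c: "c \<in> E" "v \<in> c" "c \<noteq> a" "c \<noteq> b" by (auto simp: card_Suc_eq)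
  obtain K where K: "K \<in> Fs" "c \<in> bd K" using faces_of_edge[OF c(1)] by blast
  obtain d where d: "d \<in> bd K" "v \<in> d" "d \<noteq> c" by (rule other_edge_at[OF K c(2)])
  have "d \<in> E" using d(1) K(1) face_edges by blast
  then have "d \<in> {g\<in>bd H1. v \<in> g} \<inter> {g\<in>bd H2. v \<in> g}"
    using card_3_eq_triple[OF assms(1), of a b c] \<open>a \<in> E\<close> \<open>b \<in> E\<close> assms(6) b(2,3) c d(2,3)
    unfolding same[symmetric] at_H1 by auto
  moreover have "K \<noteq> H1" "K \<noteq> H2" using same at_H1 K(2) c by auto
  ultimately show False using edge_on_third_face[OF assms(2,3) K(1) assms(4) _ _ d(1)] by blast
qed

text \<open>An interior vertex would be surrounded by three inner faces, two of which would form an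
  irregular triple across two edges meeting at that vertex.\<close>

lemma vertex_on_outer_face:
  assumes "v \<in> V"
  shows "v \<in> \<Union>(bd out)"
proof (rule ccontr)
  assume interior: "v \<notin> \<Union>(bd out)"
  have degree: "card {e\<in>E. v \<in> e} = 3" using degree_interior[OF assms interior] unfolding degree_def .
  then obtain a where a: "a \<in> E" "v \<in> a" by (metis (no_types, lifting) card.empty empty_Collect_eq zero_neq_numeral)
  obtain H1 H2 where H: "H1 \<in> Fs" "H2 \<in> Fs" "H1 \<noteq> H2" "a \<in> bd H1" "a \<in> bd H2"
    using faces_of_edge[OF a(1)] by blast
  obtain b1 where b1: "b1 \<in> bd H1" "v \<in> b1" "b1 \<noteq> a" and at_H1: "{g\<in>bd H1. v \<in> g} = {a, b1}"
    by (rule other_edge_at[OF H(1,4) a(2)])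
  obtain b2 where at_H2: "{g\<in>bd H2. v \<in> g} = {a, b2}"
    by (rule other_edge_at[OF H(2,5) a(2)])
  have "b1 \<notin> bd H2"
    using distinct_faces_distinct_edge_pairs[OF degree H(1-4) a(2)] at_H1 at_H2 b1 by auto
  obtain K where K: "K \<in> Fs" "K \<noteq> H1" "b1 \<in> bd K" using other_face[OF H(1) b1(1)] by blast
  have "H1 \<noteq> out" "H2 \<noteq> out" "K \<noteq> out" using H(4,5) K(3) a(2) b1(2) interior by blast+
  then have "even (line_dist E a b1)"
    using regular_triple[of H2 H1 K a b1] H K b1 \<open>b1 \<notin> bd H2\<close> by auto
  moreover have "b1 \<in> E" using b1(1) H(1) face_edges by blast
  ultimately show False using line_dist_meeting_edges[OF a(1) _ b1(3)[symmetric] a(2) b1(2)] by simp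
qed

lemma outer_edges_at:
  assumes "v \<in> V"
  obtains a b where "a \<in> bd out" "b \<in> bd out" "a \<noteq> b" "v \<in> a" "v \<in> b" "{g\<in>bd out. v \<in> g} = {a, b}"
proof -
  obtain a where "a \<in> bd out" "v \<in> a" using vertex_on_outer_face[OF assms] by blast
  moreover obtain b where "b \<in> bd out" "v \<in> b" "b \<noteq> a" "{g\<in>bd out. v \<in> g} = {a, b}"
    by (rule other_edge_at[OF out_face calculation])
  ultimately show ?thesis using that by blast
qed

definition chords :: "'a set set" where
  "chords = E - bd out"

lemma faces_of_shared_edge:
  assumes "H \<in> Fs" "K \<in> Fs" "H \<noteq> K" "e \<in> bd H" "e \<in> bd K"
  shows "{F\<in>Fs. e \<in> bd F} = {H, K}"
  using edge_two_faces assms face_edges by (intro card_2_eq_doubleton) auto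

lemma shared_edge_is_chord:
  assumes "H \<in> inner" "K \<in> inner" "H \<noteq> K" "e \<in> bd H" "e \<in> bd K"
  shows "e \<in> chords"
proof -
  have "e \<notin> bd out" using edge_on_third_face[of H K out e] assms out_face by auto
  then show ?thesis using assms(1,4) face_edges unfolding chords_def by auto
qed

lemma chord_faces:
  assumes "e \<in> chords"
  obtains H K where "H \<in> inner" "K \<in> inner" "H \<noteq> K" "e \<in> bd H" "e \<in> bd K"
proof -
  have "e \<in> E" using assms unfolding chords_def by blast
  then obtain H K where "H \<in> Fs" "K \<in> Fs" "H \<noteq> K" "e \<in> bd H" "e \<in> bd K"
    by (rule faces_of_edge)
  moreover have "H \<noteq> out" "K \<noteq> out" using assms calculation(4,5) unfolding chords_def by auto
  ultimately show ?thesis using that[of H K] by simp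
qed

lemma outer_edge_inner_face:
  assumes "e \<in> bd out"
  obtains G where "G \<in> inner" "e \<in> bd G"
  using other_face[OF out_face assms] by auto

lemma outer_edge_inner_face_unique:
  assumes "e \<in> bd out" "G \<in> inner" "e \<in> bd G" "H \<in> inner" "e \<in> bd H"
  shows "H = G"
  using edge_on_third_face[of out G H e] assms out_face by auto

lemma card_inner_eq_card_chords: "card inner = card chords + 1"
proof -
  have "\<Union>(bd out) = V" using vertex_on_outer_face face_edges[OF out_face] edge_subset by blast
  then have "card V = card (bd out)"
    using two_regular_card_Union[OF face_two_regular[OF out_face]] by simp
  moreover have "card E = card (bd out) + card chords"
    unfolding chords_def using face_edges[OF out_face] finite_E
    by (metis card_Diff_subset card_mono finite_subset le_add_diff_inverse)
  moreover have "card Fs = card inner + 1"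
    using card.remove[OF finite_Fs out_face] by (simp add: inner_faces_def)
  ultimately show ?thesis using euler by linarith
qed

text \<open>Chords correspond bijectively to the edges of the inner dual tree, which has one edge fewer
  than it has vertices.\<close>

lemma inner_faces_share_one_edge:
  assumes "H \<in> inner" "K \<in> inner" "H \<noteq> K" "d \<in> bd H" "d \<in> bd K" "e \<in> bd H" "e \<in> bd K"
  shows "d = e"
proof -
  define faces_of where "faces_of e = {F\<in>Fs. e \<in> bd F}" for e
  define P where "P = {{F, F'} | F F'. F \<in> inner \<and> F' \<in> inner \<and> face_adj bd F F'}"
  have "faces_of ` chords = P"
  proof (intro equalityI subsetI)
    fix p assume "p \<in> faces_of ` chords"
    then obtain c where "c \<in> chords" "p = faces_of c" by blast
    moreover obtain F F' where "F \<in> inner" "F' \<in> inner" "F \<noteq> F'" "c \<in> bd F" "c \<in> bd F'"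
      using chord_faces[OF \<open>c \<in> chords\<close>] by blast
    ultimately show "p \<in> P"
      using faces_of_shared_edge[of F F' c] unfolding faces_of_def P_def face_adj_def by auto
  next
    fix p assume "p \<in> P"
    then obtain F F' c where "F \<in> inner" "F' \<in> inner" "F \<noteq> F'" "c \<in> bd F" "c \<in> bd F'" "p = {F, F'}"
      unfolding P_def face_adj_def by blast
    then show "p \<in> faces_of ` chords"
      using faces_of_shared_edge[of F F' c] shared_edge_is_chord[of F F' c] unfolding faces_of_def by auto
  qed
  moreover have "card P + 1 = card inner" using dual_tree unfolding is_tree_def P_def by blast
  ultimately have "inj_on faces_of chords"
    using card_inner_eq_card_chords finite_E unfolding chords_def by (intro eq_card_imp_inj_on) auto
  moreover have "faces_of d = faces_of e"
    using faces_of_shared_edge[of H K d] faces_of_shared_edge[of H K e] assms unfolding faces_of_def by simp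
  ultimately show ?thesis
    using shared_edge_is_chord[of H K d] shared_edge_is_chord[of H K e] assms by (auto dest: inj_onD)
qed

definition adj_avoiding :: "'f \<Rightarrow> 'f \<Rightarrow> 'f \<Rightarrow> bool" where
  "adj_avoiding H = (\<lambda>K K'. K \<in> inner - {H} \<and> K' \<in> inner - {H} \<and> face_adj bd K K')"

definition branch :: "'f \<Rightarrow> 'a set \<Rightarrow> 'f set" where
  "branch H e = {K. \<exists>K0\<in>inner - {H}. e \<in> bd K0 \<and> (adj_avoiding H)\<^sup>*\<^sup>* K0 K}"

lemma symp_face_adj: "symp (face_adj bd)"
  unfolding symp_def face_adj_def by blast

lemma symp_adj_avoiding: "symp (adj_avoiding H)"
  using symp_face_adj unfolding symp_def adj_avoiding_def by blast

lemma branch_subset: "branch H e \<subseteq> inner - {H}"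
proof
  fix K assume "K \<in> branch H e"
  then obtain K0 where "(adj_avoiding H)\<^sup>*\<^sup>* K0 K" "K0 \<in> inner - {H}" unfolding branch_def by blast
  then show "K \<in> inner - {H}"
    by (induction rule: rtranclp_induct) (simp_all add: adj_avoiding_def)
qed

lemma branches_disjoint:
  assumes "H \<in> inner" "d \<in> bd H" "e \<in> bd H" "d \<noteq> e"
  shows "branch H d \<inter> branch H e = {}"
proof (rule ccontr)
  assume "branch H d \<inter> branch H e \<noteq> {}"
  then obtain K Kd Ke where Kd: "Kd \<in> inner - {H}" "d \<in> bd Kd" "(adj_avoiding H)\<^sup>*\<^sup>* Kd K"
    and Ke: "Ke \<in> inner - {H}" "e \<in> bd Ke" "(adj_avoiding H)\<^sup>*\<^sup>* Ke K"
    unfolding branch_def by blast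
  have "(adj_avoiding H)\<^sup>*\<^sup>* Kd Ke"
    using Kd(3) Ke(3) symp_rtranclp[OF symp_adj_avoiding] by (metis rtranclp_trans sympD)
  moreover have "Kd \<noteq> Ke"
    using inner_faces_share_one_edge[of H Kd d e] assms Kd Ke by auto
  moreover have "face_adj bd H Kd" "face_adj bd H Ke"
    using assms(2,3) Kd Ke unfolding face_adj_def by auto
  ultimately show False
    using is_tree_no_detour[OF dual_tree symp_face_adj, of H Kd Ke] assms(1)
    unfolding adj_avoiding_def by blast
qed

lemma branch_meets_face_in_edge:
  assumes "H \<in> inner" "e \<in> bd H" "K \<in> branch H e" "v \<in> \<Union>(bd K)" "v \<in> \<Union>(bd H)"
  shows "v \<in> e"
proof -
  have K: "K \<in> inner - {H}" using assms(3) branch_subset by blast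
  then obtain d where d: "d \<in> bd K" "d \<in> bd H" "v \<in> d"
    using faces_meet_in_edge[of K H v] assms(1,4,5) by auto
  then have "K \<in> branch H d" using K unfolding branch_def by blast
  then have "d = e" using branches_disjoint[OF assms(1) d(2) assms(2)] assms(3) by blast
  then show ?thesis using d(3) by simp
qed

lemma branches_vertex_disjoint:
  assumes "H \<in> inner" "d \<in> bd H" "e \<in> bd H" "K \<in> branch H d" "K' \<in> branch H e"
    and "v \<in> \<Union>(bd K)" "v \<in> \<Union>(bd K')"
  shows "d = e"
proof -
  have K: "K \<in> inner - {H}" "K' \<in> inner - {H}" using assms(4,5) branch_subset by blast+
  have "K' \<in> branch H d"
  proof (cases "K = K'")
    case False
    then obtain g where "g \<in> bd K" "g \<in> bd K'" using faces_meet_in_edge[of K K' v] assms(6,7) K by auto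
    then have "adj_avoiding H K K'" using K False unfolding adj_avoiding_def face_adj_def by auto
    then show ?thesis using assms(4) unfolding branch_def by (auto intro: rtranclp.rtrancl_into_rtrancl)
  qed (use assms(4) in simp)
  then show ?thesis using branches_disjoint[OF assms(1-3)] assms(5) by blast
qed

lemma edge_in_branch:
  assumes "H \<in> inner" "g \<in> E" "g \<notin> bd H"
  shows "\<exists>e. e \<in> bd H \<and> (\<exists>K\<in>branch H e. g \<in> bd K)"
proof -
  obtain K where K: "K \<in> inner" "g \<in> bd K"
  proof -
    obtain F F' where "F \<in> Fs" "F' \<in> Fs" "F \<noteq> F'" "g \<in> bd F" "g \<in> bd F'"
      using faces_of_edge[OF assms(2)] by blast
    then show ?thesis using that by (cases "F = out") auto
  qed
  define R where "R = (\<lambda>K K'. K \<in> inner \<and> K' \<in> inner \<and> face_adj bd K K')"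
  have "R\<^sup>*\<^sup>* H K" using dual_tree assms(1) K(1) unfolding is_tree_def R_def by blast
  moreover have "K \<noteq> H" using K(2) assms(3) by blast
  ultimately obtain K0 where "R H K0" and path: "(\<lambda>a b. R a b \<and> a \<noteq> H \<and> b \<noteq> H)\<^sup>*\<^sup>* K0 K"
    using rtranclp_first_step_avoiding[of R H K] by blast
  then obtain e where "e \<in> bd H" "e \<in> bd K0" "K0 \<in> inner - {H}" unfolding R_def face_adj_def by auto
  moreover have "(\<lambda>a b. R a b \<and> a \<noteq> H \<and> b \<noteq> H) = adj_avoiding H"
    unfolding R_def adj_avoiding_def by auto
  then have "(adj_avoiding H)\<^sup>*\<^sup>* K0 K" using path by simp
  ultimately have "K \<in> branch H e" unfolding branch_def by blast
  then show ?thesis using \<open>e \<in> bd H\<close> K(2) by blast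
qed

definition face_retract :: "'f \<Rightarrow> 'a set \<Rightarrow> 'a set" where
  "face_retract H g = (if g \<in> bd H then g else SOME e. e \<in> bd H \<and> (\<exists>K\<in>branch H e. g \<in> bd K))"

lemma face_retract_off_face:
  assumes "H \<in> inner" "g \<in> E" "g \<notin> bd H"
  shows "face_retract H g \<in> bd H" and "\<exists>K\<in>branch H (face_retract H g). g \<in> bd K"
  using someI_ex[OF edge_in_branch[OF assms]] assms(3) unfolding face_retract_def by auto

lemma face_retract_in_face: "H \<in> inner \<Longrightarrow> g \<in> E \<Longrightarrow> face_retract H g \<in> bd H"
  using face_retract_off_face(1)[of H g] by (cases "g \<in> bd H") (auto simp: face_retract_def)

lemma face_retract_line_adj:
  assumes H: "H \<in> inner" and "line_adj E g g'"
  shows "face_retract H g = face_retract H g' \<or> line_adj E (face_retract H g) (face_retract H g')"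
proof -
  obtain v where v: "v \<in> g" "v \<in> g'" and "g \<in> E" "g' \<in> E" "g \<noteq> g'"
    using assms(2) unfolding line_adj_def by blast
  have meet: "v \<in> face_retract H e" if "e \<in> E" "e \<notin> bd H" "v \<in> e" "v \<in> \<Union>(bd H)" for e
    using branch_meets_face_in_edge[OF H face_retract_off_face(1)[OF H that(1,2)]]
      face_retract_off_face(2)[OF H that(1,2)] that(3,4) by blast
  have "v \<in> face_retract H g" "v \<in> face_retract H g'" if "g \<in> bd H \<or> g' \<in> bd H"
    using that meet[of g] meet[of g'] v \<open>g \<in> E\<close> \<open>g' \<in> E\<close> unfolding face_retract_def by auto
  moreover have "face_retract H g = face_retract H g'" if "g \<notin> bd H" "g' \<notin> bd H"
    using branches_vertex_disjoint[OF H face_retract_off_face(1)[OF H \<open>g \<in> E\<close> that(1)]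
        face_retract_off_face(1)[OF H \<open>g' \<in> E\<close> that(2)]]
      face_retract_off_face(2)[OF H \<open>g \<in> E\<close> that(1)] face_retract_off_face(2)[OF H \<open>g' \<in> E\<close> that(2)] v
    by blast
  moreover have "face_retract H g \<in> E" "face_retract H g' \<in> E"
    using face_retract_in_face[OF H] face_edges H \<open>g \<in> E\<close> \<open>g' \<in> E\<close> by auto
  ultimately show ?thesis unfolding line_adj_def by blast
qed


lemma degree_2_vertex:
  assumes "v \<in> V" "card {e\<in>E. v \<in> e} = 2"
  obtains a b G where "{e\<in>E. v \<in> e} = {a, b}" "a \<noteq> b" "a \<in> bd out" "b \<in> bd out"
    "G \<in> inner" "a \<in> bd G" "b \<in> bd G"
proof -
  obtain a b where ab: "a \<in> bd out" "b \<in> bd out" "a \<noteq> b" "v \<in> a" "v \<in> b"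
    using outer_edges_at[OF assms(1)] by blast
  have "a \<in> E" "b \<in> E" using ab face_edges out_face by blast+
  then have at_v: "{e\<in>E. v \<in> e} = {a, b}" using assms(2) ab by (intro card_2_eq_doubleton) auto
  obtain G where G: "G \<in> inner" "a \<in> bd G" using outer_edge_inner_face[OF ab(1)] by blast
  obtain b' where b': "b' \<in> bd G" "v \<in> b'" "b' \<noteq> a" by (rule other_edge_at[of G a v]) (use G ab in auto)
  then have "b' \<in> {e\<in>E. v \<in> e}" using G face_edges by auto
  then have "b \<in> bd G" using at_v b' by auto
  then show ?thesis using that at_v ab G by blast
qed

lemma degree_3_vertex:
  assumes "v \<in> V" "card {e\<in>E. v \<in> e} = 3"
  obtains x y c H K where "{e\<in>E. v \<in> e} = {x, y, c}" "x \<noteq> y" "x \<noteq> c" "y \<noteq> c"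
    "x \<in> bd out" "y \<in> bd out" "c \<in> chords" "H \<in> inner" "K \<in> inner" "H \<noteq> K"
    "c \<in> bd H" "c \<in> bd K" "x \<in> bd H" "y \<in> bd K"
proof -
  obtain a b where ab: "a \<in> bd out" "b \<in> bd out" "a \<noteq> b" "v \<in> a" "v \<in> b"
    and at_out: "{g\<in>bd out. v \<in> g} = {a, b}"
    using outer_edges_at[OF assms(1)] by blast
  have "a \<in> E" "b \<in> E" using ab face_edges out_face by blast+
  have "finite {e\<in>E. v \<in> e}" using finite_E by simp
  then have "card ({e\<in>E. v \<in> e} - {a, b}) = 1"
    using assms(2) \<open>a \<in> E\<close> \<open>b \<in> E\<close> ab(3,4,5) by (simp add: card_Diff_subset)
  then obtain c where c: "c \<in> E" "v \<in> c" "c \<noteq> a" "c \<noteq> b" by (auto simp: card_Suc_eq)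
  then have "c \<in> chords" using at_out unfolding chords_def by auto
  then obtain H K where HK: "H \<in> inner" "K \<in> inner" "H \<noteq> K" "c \<in> bd H" "c \<in> bd K"
    by (rule chord_faces)
  have at_v: "{e\<in>E. v \<in> e} = {a, b, c}"
    using card_3_eq_triple[OF assms(2)] \<open>a \<in> E\<close> \<open>b \<in> E\<close> ab(3,4,5) c by auto
  have neighbour: "\<exists>x\<in>{a, b}. x \<in> bd F \<and> x \<noteq> c" if F: "F \<in> inner" "c \<in> bd F" for F
  proof -
    obtain x where x: "x \<in> bd F" "v \<in> x" "x \<noteq> c" by (rule other_edge_at[of F c v]) (use F c in auto)
    then have "x \<in> {e\<in>E. v \<in> e}" using F face_edges by auto
    then show ?thesis using x at_v by auto
  qed
  obtain x y where "x \<in> {a, b}" "x \<in> bd H" "x \<noteq> c" "y \<in> {a, b}" "y \<in> bd K" "y \<noteq> c"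
    using neighbour[OF HK(1,4)] neighbour[OF HK(2,5)] by blast
  moreover have "x \<noteq> y"
    using edge_on_third_face[of H K out x] HK out_face calculation ab(1,2) by auto
  ultimately show ?thesis using that[of x y c H K] at_v ab(1-3) c(3,4) \<open>c \<in> chords\<close> HK by auto
qed

lemma chords_same_colour:
  assumes H: "H \<in> inner" and \<kappa>: "proper_edge_colouring (bd H) \<kappa>"
    and "d \<in> bd H" "e \<in> bd H" "d \<in> chords" "e \<in> chords"
  shows "\<kappa> d = \<kappa> e"
proof (cases "d = e")
  case False
  obtain Kd where Kd: "Kd \<in> Fs" "Kd \<noteq> H" "d \<in> bd Kd" using other_face[of H d] H assms(3) by auto
  obtain Ke where Ke: "Ke \<in> Fs" "Ke \<noteq> H" "e \<in> bd Ke" using other_face[of H e] H assms(4) by auto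
  have "Kd \<noteq> out" "Ke \<noteq> out" using Kd Ke assms(5,6) unfolding chords_def by auto
  moreover have "Kd \<noteq> Ke" using inner_faces_share_one_edge[of H Kd d e] H Kd Ke assms(3,4) False calculation by auto
  ultimately have even: "even (line_dist E d e)"
    using regular_triple[of Kd H Ke d e] H Kd Ke assms(3,4) by auto
  let ?\<rho> = "face_retract H"
  have step: "?\<rho> g = ?\<rho> g' \<or> line_adj E (?\<rho> g) (?\<rho> g') \<and> \<kappa> (?\<rho> g) \<noteq> \<kappa> (?\<rho> g')"
    if "line_adj E g g'" for g g'
  proof (cases "?\<rho> g = ?\<rho> g'")
    case False
    then have adj: "line_adj E (?\<rho> g) (?\<rho> g')" using face_retract_line_adj[OF H that] by simp
    then obtain u where u: "u \<in> ?\<rho> g" "u \<in> ?\<rho> g'" unfolding line_adj_def by blast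
    have "?\<rho> g \<in> bd H" "?\<rho> g' \<in> bd H" using that face_retract_in_face[OF H] unfolding line_adj_def by auto
    then have "\<kappa> (?\<rho> g) \<noteq> \<kappa> (?\<rho> g')" using proper_edge_colouringD[OF \<kappa> _ _ False u] by blast
    then show ?thesis using adj by simp
  qed simp
  have "H \<in> Fs" using H by simp
  have walk: "(line_adj E)\<^sup>*\<^sup>* d e" by (rule is_cycle_line_connected[OF face_cycle[OF \<open>H \<in> Fs\<close>] assms(3,4)])
  show ?thesis
    by (rule even_Least_relpowp_retraction[of "line_adj E" ?\<rho> \<kappa>, OF step _ _ walk even[unfolded line_dist_def]])
      (use assms(3,4) in \<open>simp_all add: face_retract_def\<close>)
qed simp

lemma face_colouring:
  assumes H: "H \<in> inner"
  shows "\<exists>\<kappa>. proper_edge_colouring (bd H) \<kappa> \<and> (\<forall>e\<in>bd H. e \<in> chords \<longrightarrow> \<not> \<kappa> e)"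
proof -
  have "H \<in> Fs" using H by simp
  have "bipartite V (bd H)" by (rule bipartite_subset[OF bipartite face_edges[OF \<open>H \<in> Fs\<close>]])
  then obtain \<kappa> where \<kappa>: "proper_edge_colouring (bd H) \<kappa>"
    using two_regular_bipartite_edge_colouring[OF face_two_regular[OF \<open>H \<in> Fs\<close>]] by blast
  show ?thesis
  proof (cases "\<exists>c\<in>bd H. c \<in> chords")
    case True
    then obtain c where c: "c \<in> bd H" "c \<in> chords" by blast
    have "proper_edge_colouring (bd H) (\<lambda>g. \<kappa> g \<noteq> \<kappa> c)"
    proof (rule proper_edge_colouringI)
      fix g g' u assume "g \<in> bd H" "g' \<in> bd H" "g \<noteq> g'" "u \<in> g" "u \<in> g'"
      then have "\<kappa> g \<noteq> \<kappa> g'" by (rule proper_edge_colouringD[OF \<kappa>])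
      then show "(\<kappa> g \<noteq> \<kappa> c) \<noteq> (\<kappa> g' \<noteq> \<kappa> c)" by auto
    qed
    moreover have "\<forall>e\<in>bd H. e \<in> chords \<longrightarrow> \<not> (\<kappa> e \<noteq> \<kappa> c)"
      using chords_same_colour[OF H \<kappa> _ c(1) _ c(2)] by simp
    ultimately show ?thesis by (intro exI[of _ "\<lambda>g. \<kappa> g \<noteq> \<kappa> c"] conjI)
  next
    case False
    then show ?thesis using \<kappa> by (intro exI[of _ \<kappa>] conjI) auto
  qed
qed


context
  fixes \<kappa> :: "'f \<Rightarrow> 'a set \<Rightarrow> bool" and T :: "'f set"
  assumes colouring: "\<And>H. H \<in> inner \<Longrightarrow> proper_edge_colouring (bd H) (\<kappa> H)"
    and chords_uncoloured: "\<And>H e. H \<in> inner \<Longrightarrow> e \<in> bd H \<Longrightarrow> e \<in> chords \<Longrightarrow> \<not> \<kappa> H e"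
    and T_inner: "T \<subseteq> inner"
    and T_disjoint: "\<And>F F'. F \<in> T \<Longrightarrow> F' \<in> T \<Longrightarrow> F \<noteq> F' \<Longrightarrow> \<Union>(bd F) \<inter> \<Union>(bd F') = {}"
begin

definition resonance_matching :: "'a set set" where
  "resonance_matching = {e\<in>E. \<forall>H\<in>inner. e \<in> bd H \<longrightarrow> (\<kappa> H e \<longleftrightarrow> H \<in> T)}"

lemma outer_edge_in_resonance_matching:
  assumes "e \<in> bd out" "G \<in> inner" "e \<in> bd G"
  shows "e \<in> resonance_matching \<longleftrightarrow> (\<kappa> G e \<longleftrightarrow> G \<in> T)"
proof -
  have "e \<in> E" using assms(1) face_edges out_face by blast
  moreover have "(\<forall>H\<in>inner. e \<in> bd H \<longrightarrow> (\<kappa> H e \<longleftrightarrow> H \<in> T)) \<longleftrightarrow> (\<kappa> G e \<longleftrightarrow> G \<in> T)"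
    using outer_edge_inner_face_unique[OF assms] assms(2,3) by blast
  ultimately show ?thesis unfolding resonance_matching_def by simp
qed

lemma chord_in_resonance_matching:
  assumes "H \<in> inner" "K \<in> inner" "H \<noteq> K" "e \<in> bd H" "e \<in> bd K"
  shows "e \<in> resonance_matching \<longleftrightarrow> H \<notin> T \<and> K \<notin> T"
proof -
  have "e \<in> chords" by (rule shared_edge_is_chord[OF assms])
  then have "\<not> \<kappa> H e" "\<not> \<kappa> K e" using chords_uncoloured assms by blast+
  moreover have "F = H \<or> F = K" if "F \<in> inner" "e \<in> bd F" for F
    using faces_of_shared_edge[of H K e] assms that by auto
  ultimately have "(\<forall>F\<in>inner. e \<in> bd F \<longrightarrow> (\<kappa> F e \<longleftrightarrow> F \<in> T)) \<longleftrightarrow> H \<notin> T \<and> K \<notin> T"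
    using assms by blast
  moreover have "e \<in> E" using \<open>e \<in> chords\<close> unfolding chords_def by blast
  ultimately show ?thesis unfolding resonance_matching_def by simp
qed

lemma resonance_matching_on_face:
  assumes "F \<in> T" "e \<in> bd F"
  shows "e \<in> resonance_matching \<longleftrightarrow> \<kappa> F e"
proof -
  have F: "F \<in> inner" using assms(1) T_inner by blast
  show ?thesis
  proof (cases "e \<in> bd out")
    case True
    then show ?thesis using outer_edge_in_resonance_matching[OF True F assms(2)] assms(1) by simp
  next
    case False
    then have "e \<in> chords" using assms(2) F face_edges unfolding chords_def by auto
    then obtain H K where HK: "H \<in> inner" "K \<in> inner" "H \<noteq> K" "e \<in> bd H" "e \<in> bd K"
      by (rule chord_faces)
    then have "F = H \<or> F = K" using faces_of_shared_edge[of H K e] F assms(2) by auto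
    then have "e \<notin> resonance_matching" using chord_in_resonance_matching[OF HK] assms(1) by auto
    then show ?thesis using chords_uncoloured[OF F assms(2) \<open>e \<in> chords\<close>] by simp
  qed
qed

lemma resonance_matching_alternating:
  assumes "F \<in> T"
  shows "M_alternating bd resonance_matching F"
  unfolding M_alternating_def
proof
  fix v assume "v \<in> \<Union>(bd F)"
  then obtain p where p: "p \<in> bd F" "v \<in> p" by blast
  have F: "F \<in> Fs" "F \<in> inner" using assms T_inner by auto
  obtain q where q: "q \<in> bd F" "v \<in> q" "q \<noteq> p" and at_v: "{g\<in>bd F. v \<in> g} = {p, q}"
    by (rule other_edge_at[OF F(1) p])
  have "\<kappa> F p \<noteq> \<kappa> F q" using proper_edge_colouringD[OF colouring[OF F(2)] p(1) q(1) q(3)[symmetric] p(2) q(2)] .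
  then have "(p \<in> resonance_matching) \<noteq> (q \<in> resonance_matching)"
    using resonance_matching_on_face[OF assms p(1)] resonance_matching_on_face[OF assms q(1)] by simp
  moreover have "{e \<in> bd F \<inter> resonance_matching. v \<in> e} = {p, q} \<inter> resonance_matching"
    unfolding at_v[symmetric] by blast
  ultimately show "card {e \<in> bd F \<inter> resonance_matching. v \<in> e} = 1"
    using q(3) by (cases "p \<in> resonance_matching") auto
qed

lemma resonance_matching_at: "{e\<in>resonance_matching. v \<in> e} = {e\<in>E. v \<in> e} \<inter> resonance_matching"
  unfolding resonance_matching_def by blast

lemma resonance_matching_degree_2:
  assumes "v \<in> V" "card {e\<in>E. v \<in> e} = 2"
  shows "card {e\<in>resonance_matching. v \<in> e} = 1"
proof -
  obtain a b G where at_v: "{e\<in>E. v \<in> e} = {a, b}" and ab: "a \<noteq> b" "a \<in> bd out" "b \<in> bd out"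
    and G: "G \<in> inner" "a \<in> bd G" "b \<in> bd G"
    by (rule degree_2_vertex[OF assms])
  have "v \<in> a" "v \<in> b" using at_v by auto
  then have "\<kappa> G a \<noteq> \<kappa> G b" using proper_edge_colouringD[OF colouring[OF G(1)] G(2,3) ab(1)] by blast
  then have "(a \<in> resonance_matching) \<noteq> (b \<in> resonance_matching)"
    using outer_edge_in_resonance_matching[OF ab(2) G(1,2)] outer_edge_in_resonance_matching[OF ab(3) G(1,3)]
    by (cases "\<kappa> G a"; cases "G \<in> T") auto
  then show ?thesis unfolding resonance_matching_at at_v using ab(1) by (cases "a \<in> resonance_matching") auto
qed

lemma chord_neighbour_in_resonance_matching:
  assumes "H \<in> inner" "c \<in> bd H" "c \<in> chords" "x \<in> bd H" "x \<in> bd out" "x \<noteq> c" "v \<in> c" "v \<in> x"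
  shows "x \<in> resonance_matching \<longleftrightarrow> H \<in> T"
proof -
  have "\<kappa> H x \<noteq> \<kappa> H c" using proper_edge_colouringD[OF colouring[OF assms(1)] assms(4,2,6,8,7)] .
  then have "\<kappa> H x" using chords_uncoloured[OF assms(1-3)] by simp
  then show ?thesis using outer_edge_in_resonance_matching[OF assms(5,1,4)] by simp
qed

lemma resonance_matching_degree_3:
  assumes "v \<in> V" "card {e\<in>E. v \<in> e} = 3"
  shows "card {e\<in>resonance_matching. v \<in> e} = 1"
proof -
  obtain x y c H K where at_v: "{e\<in>E. v \<in> e} = {x, y, c}" and xyc: "x \<noteq> y" "x \<noteq> c" "y \<noteq> c"
    and outer: "x \<in> bd out" "y \<in> bd out" and "c \<in> chords"
    and HK: "H \<in> inner" "K \<in> inner" "H \<noteq> K" "c \<in> bd H" "c \<in> bd K" "x \<in> bd H" "y \<in> bd K"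
    by (rule degree_3_vertex[OF assms])
  have "v \<in> x" "v \<in> y" "v \<in> c" using at_v by auto
  have "x \<in> resonance_matching \<longleftrightarrow> H \<in> T" "y \<in> resonance_matching \<longleftrightarrow> K \<in> T"
    using chord_neighbour_in_resonance_matching[OF HK(1,4) \<open>c \<in> chords\<close> HK(6) outer(1) xyc(2)]
      chord_neighbour_in_resonance_matching[OF HK(2,5) \<open>c \<in> chords\<close> HK(7) outer(2) xyc(3)]
      \<open>v \<in> x\<close> \<open>v \<in> y\<close> \<open>v \<in> c\<close> by simp_all
  moreover have "c \<in> resonance_matching \<longleftrightarrow> H \<notin> T \<and> K \<notin> T"
    by (rule chord_in_resonance_matching[OF HK(1-5)])
  moreover have "\<not> (H \<in> T \<and> K \<in> T)" using T_disjoint[of H K] HK(3,4,5) \<open>v \<in> c\<close> by blast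
  ultimately show ?thesis
    unfolding resonance_matching_at at_v using xyc by (cases "H \<in> T"; cases "K \<in> T") auto
qed

lemma resonance_matching_perfect: "perfect_matching V E resonance_matching"
  unfolding perfect_matching_def degree_def
proof (intro conjI ballI)
  show "resonance_matching \<subseteq> E" unfolding resonance_matching_def by blast
  fix v assume "v \<in> V"
  then show "card {e\<in>resonance_matching. v \<in> e} = 1"
    using degree_boundary[OF \<open>v \<in> V\<close> vertex_on_outer_face[OF \<open>v \<in> V\<close>]]
      resonance_matching_degree_2 resonance_matching_degree_3 unfolding degree_def by blast
qed

end


theorem vertex_disjoint_faces_resonant:
  assumes T_inner: "T \<subseteq> inner"
    and T_disjoint: "\<And>F F'. F \<in> T \<Longrightarrow> F' \<in> T \<Longrightarrow> F \<noteq> F' \<Longrightarrow> \<Union>(bd F) \<inter> \<Union>(bd F') = {}"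
  shows "resonant_set V E Fs bd out T"
proof -
  have "\<forall>H\<in>inner. \<exists>\<kappa>. proper_edge_colouring (bd H) \<kappa> \<and> (\<forall>e\<in>bd H. e \<in> chords \<longrightarrow> \<not> \<kappa> e)"
    using face_colouring by blast
  then obtain \<kappa> where \<kappa>: "\<forall>H\<in>inner. proper_edge_colouring (bd H) (\<kappa> H) \<and> (\<forall>e\<in>bd H. e \<in> chords \<longrightarrow> \<not> \<kappa> H e)"
    by (auto dest: bchoice)
  have colouring: "\<And>H. H \<in> inner \<Longrightarrow> proper_edge_colouring (bd H) (\<kappa> H)"
    and uncoloured: "\<And>H e. H \<in> inner \<Longrightarrow> e \<in> bd H \<Longrightarrow> e \<in> chords \<Longrightarrow> \<not> \<kappa> H e"
    using \<kappa> by blast+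
  show ?thesis
    unfolding resonant_set_def
    using T_inner T_disjoint resonance_matching_perfect[OF colouring uncoloured T_inner T_disjoint]
      resonance_matching_alternating[OF colouring uncoloured T_inner T_disjoint] by blast
qed

end

theorem lemma4p5:
  fixes V :: "'a set" and E :: "'a set set" and Fs :: "'f set"
    and bd :: "'f \<Rightarrow> 'a set set" and out :: 'f and S :: "'f set" and F :: 'f
  assumes "regular_cers V E Fs bd out"
    and "maximal_resonant_set V E Fs bd out S"
    and "F \<in> inner_faces Fs out"
    and "F \<notin> S"
  shows "\<exists>F'\<in>S. face_adj bd F F'"
proof (rule ccontr)
  assume no_adjacent: "\<not> (\<exists>F'\<in>S. face_adj bd F F')"
  interpret regular_cers_graph V E Fs bd out by unfold_locales (rule assms(1))
  have S: "S \<subseteq> inner" "\<And>F F'. F \<in> S \<Longrightarrow> F' \<in> S \<Longrightarrow> F \<noteq> F' \<Longrightarrow> \<Union>(bd F) \<inter> \<Union>(bd F') = {}"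
    using assms(2) unfolding maximal_resonant_set_def resonant_set_def by blast+
  have F_disjoint: "\<Union>(bd F) \<inter> \<Union>(bd F') = {}" if "F' \<in> S" for F'
  proof (rule ccontr)
    assume "\<Union>(bd F) \<inter> \<Union>(bd F') \<noteq> {}"
    then obtain v where "v \<in> \<Union>(bd F)" "v \<in> \<Union>(bd F')" by blast
    moreover have "F \<in> Fs" "F' \<in> Fs" using assms(3) S(1) that by auto
    ultimately obtain e where "e \<in> bd F" "e \<in> bd F'" using faces_meet_in_edge by blast
    moreover have "F \<noteq> F'" using that assms(4) by blast
    ultimately have "face_adj bd F F'" unfolding face_adj_def by blast
    then show False using no_adjacent that by blast
  qed
  have "\<Union>(bd F1) \<inter> \<Union>(bd F2) = {}" if "F1 \<in> insert F S" "F2 \<in> insert F S" "F1 \<noteq> F2" for F1 F2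
  proof -
    from that consider "F1 = F" "F2 \<in> S" | "F2 = F" "F1 \<in> S" | "F1 \<in> S" "F2 \<in> S" by blast
    then show ?thesis
      by cases (use F_disjoint S(2) \<open>F1 \<noteq> F2\<close> in \<open>auto simp: Int_commute\<close>)
  qed
  then have "resonant_set V E Fs bd out (insert F S)"
    using S(1) assms(3) by (intro vertex_disjoint_faces_resonant) auto
  then have "insert F S = S" using assms(2) unfolding maximal_resonant_set_def by blast
  with assms(4) show False by blast
qed

end
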